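(* Let $P$ be a finite order having no level-induced suborder isomorphic to $O_{obs1}$ and no level-induced suborder isomorphic to $O_{obs2}$ (in particular, any finite order with property (itov)). Then $P$ has a relatively maximum full trunk.
   Context: Orders are partial orders; $x\sim y$ means $x\ne y$ and $x,y$ incomparable. $O_{obs1}$ is the order on $\{a,b,c,d\}$ whose only comparabilities are $a<b$, $c<d$; $O_{obs2}$ is the order on $\{a,b,c,d\}$ whose only comparabilities are $a<b$, $c<d$, $c<b$. Property (itov): no induced suborder isomorphic to $O_{obs1}$ or $O_{obs2}$. For a well-founded (e.g. finite) order $Q$, $\mathrm{Level}_Q(x)=\sup\{\mathrm{Level}_Q(y)+1:y<x\}$. A level-induced suborder of $P$ is a subset $S$ with the induced order $P|_S$ such that for all $x,y\in S$: $\mathrm{Level}_{P|_S}(x)=\mathrm{Level}_{P|_S}(y)$ iff $\mathrm{Level}_P(x)=\mathrm{Level}_P(y)$. A trunk of $P$ is a subset $T$ such that for pairwise distinct $x,y,z\in T$, $x\sim y$ and $y\sim z$ imply $x\sim z$. A chain is maximum if it has maximum cardinality among chains of $P$. A full trunk is a trunk containing a maximum chain; a relatively maximum full trunk is a full trunk that is the unique inclusion-maximal full trunk of $P$. *)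

theory Defs
  imports Main
begin

text \<open>A (partial) order is a pair of a carrier set S and a reflexive, antisymmetric,
  transitive relation r on S (library notion partial_order_on).\<close>

definition strict_rel :: "'a rel \<Rightarrow> 'a rel" where
  "strict_rel r = r - Id"

text \<open>Level_Q(x) = sup { Level_Q(y)+1 : y < x }, by well-founded recursion
  (sup of the empty set is 0).\<close>
definition level :: "'a rel \<Rightarrow> 'a \<Rightarrow> nat" where
  "level r = wfrec (strict_rel r)
     (\<lambda>f x. Max (insert 0 ((\<lambda>y. f y + 1) ` {y. (y, x) \<in> strict_rel r})))"

definition induced :: "'a rel \<Rightarrow> 'a set \<Rightarrow> 'a rel" where
  "induced r T = r \<inter> (T \<times> T)"

definition level_induced :: "'a set \<Rightarrow> 'a rel \<Rightarrow> 'a set \<Rightarrow> bool" where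
  "level_induced S r T \<longleftrightarrow> T \<subseteq> S \<and>
     (\<forall>x\<in>T. \<forall>y\<in>T. level (induced r T) x = level (induced r T) y
                      \<longleftrightarrow> level r x = level r y)"

definition order_iso :: "'a set \<Rightarrow> 'a rel \<Rightarrow> 'b set \<Rightarrow> 'b rel \<Rightarrow> bool" where
  "order_iso A r B s \<longleftrightarrow> (\<exists>f. bij_betw f A B \<and>
     (\<forall>x\<in>A. \<forall>y\<in>A. (x, y) \<in> r \<longleftrightarrow> (f x, f y) \<in> s))"

text \<open>Obstructions on {a,b,c,d} = {0,1,2,3}: a = 0, b = 1, c = 2, d = 3.\<close>
definition obs_carrier :: "nat set" where
  "obs_carrier = {0, 1, 2, 3}"

definition O_obs1 :: "nat rel" where
  "O_obs1 = Id_on obs_carrier \<union> {(0, 1), (2, 3)}"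

definition O_obs2 :: "nat rel" where
  "O_obs2 = Id_on obs_carrier \<union> {(0, 1), (2, 3), (2, 1)}"

definition incomparable :: "'a rel \<Rightarrow> 'a \<Rightarrow> 'a \<Rightarrow> bool" where
  "incomparable r x y \<longleftrightarrow> x \<noteq> y \<and> (x, y) \<notin> r \<and> (y, x) \<notin> r"

definition trunk :: "'a set \<Rightarrow> 'a rel \<Rightarrow> 'a set \<Rightarrow> bool" where
  "trunk S r T \<longleftrightarrow> T \<subseteq> S \<and>
     (\<forall>x\<in>T. \<forall>y\<in>T. \<forall>z\<in>T. x \<noteq> y \<and> y \<noteq> z \<and> x \<noteq> z \<longrightarrow>
        incomparable r x y \<longrightarrow> incomparable r y z \<longrightarrow> incomparable r x z)"

definition is_chain :: "'a set \<Rightarrow> 'a rel \<Rightarrow> 'a set \<Rightarrow> bool" where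
  "is_chain S r C \<longleftrightarrow> C \<subseteq> S \<and> (\<forall>x\<in>C. \<forall>y\<in>C. (x, y) \<in> r \<or> (y, x) \<in> r)"

definition maximum_chain :: "'a set \<Rightarrow> 'a rel \<Rightarrow> 'a set \<Rightarrow> bool" where
  "maximum_chain S r C \<longleftrightarrow> is_chain S r C \<and>
     (\<forall>C'. is_chain S r C' \<longrightarrow> card C' \<le> card C)"

definition full_trunk :: "'a set \<Rightarrow> 'a rel \<Rightarrow> 'a set \<Rightarrow> bool" where
  "full_trunk S r T \<longleftrightarrow> trunk S r T \<and> (\<exists>C. maximum_chain S r C \<and> C \<subseteq> T)"

definition maximal_full_trunk :: "'a set \<Rightarrow> 'a rel \<Rightarrow> 'a set \<Rightarrow> bool" where
  "maximal_full_trunk S r T \<longleftrightarrow> full_trunk S r T \<and>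
     (\<forall>T'. full_trunk S r T' \<and> T \<subseteq> T' \<longrightarrow> T' = T)"

definition relatively_maximum_full_trunk :: "'a set \<Rightarrow> 'a rel \<Rightarrow> 'a set \<Rightarrow> bool" where
  "relatively_maximum_full_trunk S r T \<longleftrightarrow> maximal_full_trunk S r T \<and>
     (\<forall>T'. maximal_full_trunk S r T' \<longrightarrow> T' = T)"

end

theory Submission
  imports Defs
begin

text \<open>In a finite order the level function is strictly monotone and every maximum chain
  meets each level exactly once, so a trunk containing a maximum chain has comparable elements on
  any two distinct levels.  Now let \<open>x\<close> and \<open>y\<close> lie in full trunks \<open>T\<close> and \<open>T'\<close>, with
  \<open>level x < level y\<close> but \<open>x\<close> not below \<open>y\<close>.  The maximum chain in \<open>T\<close> has an element \<open>y'\<close>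
  on the level of \<open>y\<close>, necessarily above \<open>x\<close>, and the one in \<open>T'\<close> an element \<open>x'\<close> on the
  level of \<open>x\<close>, necessarily below \<open>y\<close>.  Then \<open>{x, y', x', y}\<close> is a level-induced copy of
  \<open>O_obs1\<close>, or of \<open>O_obs2\<close> if \<open>x' < y'\<close>.  Excluding both, incomparable elements of full trunks
  lie on a common level, where all distinct elements are incomparable; hence the union of all
  full trunks is again a trunk, and it is the greatest full trunk.\<close>

lemma order_iso_obs_carrierI:
  assumes "distinct [a, b, c, d]"
    and "\<And>u v. u \<in> {a, b, c, d} \<Longrightarrow> v \<in> {a, b, c, d} \<Longrightarrow> (u, v) \<in> R \<longleftrightarrow>
           u = v \<or> (u, v) = (a, b) \<or> (u, v) = (c, d) \<or> (E \<and> (u, v) = (c, b))"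
  shows "order_iso {a, b, c, d} R obs_carrier (if E then O_obs2 else O_obs1)"
proof -
  define f where "f w = (if w = a then 0 else if w = b then 1 else if w = c then 2 else 3::nat)"
    for w
  have f: "f a = 0" "f b = 1" "f c = 2" "f d = 3"
    using assms(1) by (auto simp: f_def)
  have "bij_betw f {a, b, c, d} obs_carrier"
    unfolding bij_betw_def inj_on_def obs_carrier_def using f by auto
  moreover have "(u, v) \<in> R \<longleftrightarrow> (f u, f v) \<in> (if E then O_obs2 else O_obs1)"
    if "u \<in> {a, b, c, d}" "v \<in> {a, b, c, d}" for u v
  proof -
    have "a \<noteq> b" "a \<noteq> c" "a \<noteq> d" "b \<noteq> c" "b \<noteq> d" "c \<noteq> d"
      using assms(1) by auto
    moreover have "u = a \<or> u = b \<or> u = c \<or> u = d" "v = a \<or> v = b \<or> v = c \<or> v = d"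
      using that by auto
    ultimately show ?thesis
      using assms(2)[OF that] f
      by (elim disjE) (simp_all add: O_obs1_def O_obs2_def obs_carrier_def Id_on_iff)
  qed
  ultimately show ?thesis
    unfolding order_iso_def by blast
qed

lemma full_trunk_maximum_chain: "maximum_chain S r C \<Longrightarrow> full_trunk S r C"
  unfolding full_trunk_def trunk_def maximum_chain_def is_chain_def incomparable_def by blast

lemma trunkD:
  assumes "trunk S r T" and "x \<in> T" "y \<in> T" "z \<in> T" and "x \<noteq> y" "y \<noteq> z" "x \<noteq> z"
    and "incomparable r x y" "incomparable r y z"
  shows "incomparable r x z"
  using assms unfolding trunk_def by blast

lemma relatively_maximum_full_trunk_if_greatest:
  assumes "full_trunk S r U" and "\<And>T. full_trunk S r T \<Longrightarrow> T \<subseteq> U"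
  shows "relatively_maximum_full_trunk S r U"
  using assms unfolding relatively_maximum_full_trunk_def maximal_full_trunk_def by blast

lemma incomparable_commute: "incomparable r a b \<longleftrightarrow> incomparable r b a"
  unfolding incomparable_def by blast

locale finite_order =
  fixes S :: "'a set" and r :: "'a rel"
  assumes finite_carrier: "finite S" and partial_order: "partial_order_on S r"
begin

lemma rel_subset: "r \<subseteq> S \<times> S"
  using partial_order by (rule partial_order_onD)

lemma trans_rel: "trans r"
  using partial_order by (rule partial_order_onD)

lemma antisym_rel: "antisym r"
  using partial_order by (rule partial_order_onD)

lemma refl_rel: "x \<in> S \<Longrightarrow> (x, x) \<in> r"
  using partial_order_onD(1)[OF partial_order] by (simp add: refl_on_def)

lemma finite_rel: "finite r"
  using rel_subset finite_carrier by (meson finite_SigmaI finite_subset)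

lemma finite_order_induced: "T \<subseteq> S \<Longrightarrow> finite_order T (induced r T)"
  using finite_carrier partial_order
  unfolding finite_order_def partial_order_on_def preorder_on_def refl_on_def trans_def
    antisym_def induced_def
  by (auto intro: finite_subset)

lemma wf_strict_rel: "wf (strict_rel r)"
proof -
  have "trans (strict_rel r)"
    using trans_rel antisym_rel unfolding strict_rel_def trans_def antisym_def by blast
  then have "acyclic (strict_rel r)"
    unfolding acyclic_def by (auto simp: trancl_id strict_rel_def)
  moreover have "finite (strict_rel r)"
    using finite_rel unfolding strict_rel_def by simp
  ultimately show ?thesis
    by (simp add: wf_iff_acyclic_if_finite)
qed

lemma finite_strict_predecessors: "finite {y. (y, x) \<in> strict_rel r}"
  using finite_rel
  by (rule finite_subset[rotated, OF finite_imageI[of _ fst]]) (force simp: strict_rel_def)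

lemma level_unfold:
  "level r x = Max (insert 0 ((\<lambda>y. level r y + 1) ` {y. (y, x) \<in> strict_rel r}))"
proof -
  have "level r x = Max (insert 0 ((\<lambda>y. cut (level r) (strict_rel r) x y + 1)
      ` {y. (y, x) \<in> strict_rel r}))"
    unfolding level_def by (subst wfrec[OF wf_strict_rel]) simp
  also have "\<dots> = Max (insert 0 ((\<lambda>y. level r y + 1) ` {y. (y, x) \<in> strict_rel r}))"
    by (auto simp: cut_apply intro!: arg_cong[where f = Max] image_cong)
  finally show ?thesis .
qed

lemma level_less:
  assumes "(y, x) \<in> r" and "y \<noteq> x"
  shows "level r y < level r x"
proof -
  have "level r y + 1 \<le> Max (insert 0 ((\<lambda>y. level r y + 1) ` {y. (y, x) \<in> strict_rel r}))"
    using finite_strict_predecessors assms by (intro Max_ge) (auto simp: strict_rel_def)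
  then show ?thesis
    using level_unfold[of x] by simp
qed

lemma not_rel_if_level_le: "a \<noteq> b \<Longrightarrow> level r b \<le> level r a \<Longrightarrow> (a, b) \<notin> r"
  using level_less by force

lemma incomparable_if_level_eq: "a \<noteq> b \<Longrightarrow> level r a = level r b \<Longrightarrow> incomparable r a b"
  unfolding incomparable_def using not_rel_if_level_le by simp

lemma level_eq_0:
  assumes "\<And>y. (y, x) \<in> r \<Longrightarrow> y = x"
  shows "level r x = 0"
proof -
  have "{y. (y, x) \<in> strict_rel r} = {}"
    using assms by (auto simp: strict_rel_def)
  then show ?thesis
    using level_unfold[of x] by simp
qed

lemma level_eq_1:
  assumes "(y, x) \<in> r" and "y \<noteq> x"
    and "\<And>z. (z, x) \<in> r \<Longrightarrow> z \<noteq> x \<Longrightarrow> level r z = 0"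
  shows "level r x = 1"
proof -
  have "(\<lambda>y. level r y + 1) ` {y. (y, x) \<in> strict_rel r} = {1}"
    using assms by (auto simp: strict_rel_def)
  then show ?thesis
    using level_unfold[of x] by simp
qed

lemma level_eq_0_or_Suc_level:
  "level r x = 0 \<or> (\<exists>y. (y, x) \<in> strict_rel r \<and> level r x = level r y + 1)"
proof -
  have "Max (insert 0 ((\<lambda>y. level r y + 1) ` {y. (y, x) \<in> strict_rel r}))
       \<in> insert 0 ((\<lambda>y. level r y + 1) ` {y. (y, x) \<in> strict_rel r})"
    using finite_strict_predecessors by (intro Max_in) auto
  then show ?thesis
    using level_unfold[of x] by auto
qed

lemma chain_below_with_card_level:
  "z \<in> S \<Longrightarrow> \<exists>C. is_chain S r C \<and> card C = level r z + 1 \<and> (\<forall>c\<in>C. (c, z) \<in> r)"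
proof (induction z rule: wf_induct_rule[OF wf_strict_rel])
  case (1 z)
  from level_eq_0_or_Suc_level[of z] show ?case
  proof
    assume "level r z = 0"
    then show ?thesis
      using 1(2) refl_rel by (intro exI[of _ "{z}"]) (auto simp: is_chain_def)
  next
    assume "\<exists>y. (y, z) \<in> strict_rel r \<and> level r z = level r y + 1"
    then obtain y where y: "(y, z) \<in> strict_rel r" "level r z = level r y + 1"
      by blast
    have "y \<in> S"
      using y(1) rel_subset by (auto simp: strict_rel_def)
    then obtain C
      where C: "is_chain S r C" "card C = level r y + 1" "\<forall>c\<in>C. (c, y) \<in> r"
      using 1(1)[OF y(1)] by blast
    have "finite C"
      using C(1) finite_carrier by (auto simp: is_chain_def intro: finite_subset)
    moreover have "z \<notin> C"
      using C(3) y(1) antisym_rel by (auto simp: strict_rel_def antisym_def)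
    moreover have "\<forall>c\<in>C. (c, z) \<in> r"
      using C(3) y(1) trans_rel by (auto simp: strict_rel_def trans_def)
    ultimately show ?thesis
      using C(1,2) y(2) 1(2) refl_rel
      by (intro exI[of _ "insert z C"]) (auto simp: is_chain_def)
  qed
qed

lemma maximum_chain_exists: "\<exists>C. maximum_chain S r C"
proof -
  have "card C < card S + 1" if "is_chain S r C" for C
    using that finite_carrier card_mono by (fastforce simp: is_chain_def)
  then obtain C where "is_chain S r C" "\<forall>C'. is_chain S r C' \<longrightarrow> card C' \<le> card C"
    using Lattices_Big.ex_has_greatest_nat[of "is_chain S r" "{}" card "card S + 1"]
    by (auto simp: is_chain_def)
  then show ?thesis
    unfolding maximum_chain_def by blast
qed

lemma level_less_card_maximum_chain:
  assumes "maximum_chain S r C" and "z \<in> S"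
  shows "level r z < card C"
proof -
  obtain D where "is_chain S r D" "card D = level r z + 1"
    using chain_below_with_card_level[OF assms(2)] by blast
  then show ?thesis
    using assms(1) unfolding maximum_chain_def by fastforce
qed

lemma level_image_maximum_chain:
  assumes "maximum_chain S r C"
  shows "level r ` C = {..<card C}"
proof (rule card_subset_eq)
  have chain: "is_chain S r C"
    using assms by (simp add: maximum_chain_def)
  then show "level r ` C \<subseteq> {..<card C}"
    using level_less_card_maximum_chain[OF assms] by (auto simp: is_chain_def)
  have "inj_on (level r) C"
  proof (rule inj_onI)
    fix a b
    assume "a \<in> C" "b \<in> C" "level r a = level r b"
    then show "a = b"
      using chain incomparable_if_level_eq[of a b] by (auto simp: is_chain_def incomparable_def)
  qed
  then show "card (level r ` C) = card {..<card C}"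
    by (simp add: card_image)
qed simp

lemma maximum_chain_meets_level:
  assumes "maximum_chain S r C" and "z \<in> S"
  shows "\<exists>c\<in>C. level r c = level r z"
  using level_less_card_maximum_chain[OF assms] level_image_maximum_chain[OF assms(1)]
  by (metis imageE lessThan_iff)

lemma trunk_incomparable_level_shift:
  assumes "trunk S r T" and "a \<in> T" "b \<in> T" "b' \<in> T"
    and "incomparable r a b" "level r b' = level r b" "level r a \<noteq> level r b"
  shows "incomparable r a b'"
proof (cases "b' = b")
  case False
  then have "incomparable r b b'"
    using assms(6) incomparable_if_level_eq by simp
  moreover have "a \<noteq> b" "a \<noteq> b'"
    using assms(6,7) by auto
  ultimately show ?thesis
    using trunkD[OF assms(1-4)] assms(5) False by blast
qed (use assms in simp)

lemma full_trunk_comparable_if_level_neq: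
  assumes "full_trunk S r T" and "x \<in> T" "y \<in> T" "level r x \<noteq> level r y"
  shows "(x, y) \<in> r \<or> (y, x) \<in> r"
proof (rule ccontr)
  assume "\<not> ?thesis"
  then have xy: "incomparable r x y"
    using assms(4) by (auto simp: incomparable_def)
  obtain C where C: "maximum_chain S r C" "C \<subseteq> T" and trunk: "trunk S r T"
    using assms(1) unfolding full_trunk_def by blast
  have "x \<in> S" "y \<in> S"
    using trunk assms(2,3) by (auto simp: trunk_def)
  then obtain cx cy where cx: "cx \<in> C" "level r cx = level r x" and cy: "cy \<in> C" "level r cy = level r y"
    using maximum_chain_meets_level[OF C(1)] by metis
  have "cx \<in> T" "cy \<in> T"
    using C(2) cx(1) cy(1) by auto
  have "incomparable r y cx"
    using trunk_incomparable_level_shift[OF trunk assms(3,2) \<open>cx \<in> T\<close>] cx(2) xy assms(4)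
    by (auto simp: incomparable_commute)
  then have "incomparable r cx cy"
    using trunk_incomparable_level_shift[OF trunk \<open>cx \<in> T\<close> assms(3) \<open>cy \<in> T\<close>] cx(2) cy(2) assms(4)
    by (auto simp: incomparable_commute)
  moreover have "is_chain S r C"
    using C(1) by (simp add: maximum_chain_def)
  ultimately show False
    using cx(1) cy(1) by (auto simp: is_chain_def incomparable_def)
qed

lemma level_induced_two_levels:
  assumes "T \<subseteq> S" and "i < j" and "\<And>a. a \<in> T \<Longrightarrow> level r a = i \<or> level r a = j"
    and "\<And>b. b \<in> T \<Longrightarrow> level r b = j \<Longrightarrow> \<exists>a\<in>T. (a, b) \<in> r \<and> level r a = i"
  shows "level_induced S r T"
proof -
  interpret T: finite_order T "induced r T"
    using finite_order_induced[OF assms(1)] .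
  have induced: "(a, b) \<in> induced r T \<longleftrightarrow> (a, b) \<in> r \<and> a \<in> T \<and> b \<in> T" for a b
    by (simp add: induced_def)
  have lower: "level (induced r T) a = 0" if "a \<in> T" "level r a = i" for a
  proof (rule T.level_eq_0)
    fix y
    assume "(y, a) \<in> induced r T"
    then show "y = a"
      using that assms(2,3) level_less[of y a] by (fastforce simp: induced)
  qed
  have upper: "level (induced r T) b = 1" if b: "b \<in> T" "level r b = j" for b
  proof -
    obtain a where "a \<in> T" "(a, b) \<in> r" "level r a = i"
      using assms(4) b by blast
    then show ?thesis
      using b assms(2,3) level_less lower
      by (intro T.level_eq_1[of a]) (fastforce simp: induced)+
  qed
  show ?thesis
    unfolding level_induced_def using assms(1-3) lower upper by (metis zero_neq_one)
qed

lemma level_induced_obstruction_if_crossing: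
  assumes "x \<in> S" "y \<in> S" "x' \<in> S" "y' \<in> S"
    and "(x, y') \<in> r" "(x', y) \<in> r" "(x, y) \<notin> r"
    and "level r x' = level r x" "level r y' = level r y" "level r x < level r y"
  shows "\<exists>T. level_induced S r T \<and>
    (order_iso T (induced r T) obs_carrier O_obs1 \<or> order_iso T (induced r T) obs_carrier O_obs2)"
proof -
  let ?T = "{x, y', x', y}"
  have "x \<noteq> x'" "y \<noteq> y'"
    using assms(5-7) by auto
  moreover have "x \<noteq> y" "x \<noteq> y'" "x' \<noteq> y" "x' \<noteq> y'"
    using assms(8-10) by auto
  ultimately have distinct: "distinct [x, y', x', y]"
    by auto
  have "level_induced S r ?T"
    using assms by (intro level_induced_two_levels[of _ "level r x" "level r y"]) auto
  moreover have "order_iso ?T (induced r ?T) obs_carrier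
      (if (x', y') \<in> r then O_obs2 else O_obs1)"
  proof (rule order_iso_obs_carrierI[OF distinct])
    fix u v
    assume "u \<in> ?T" "v \<in> ?T"
    then show "(u, v) \<in> induced r ?T \<longleftrightarrow>
        u = v \<or> (u, v) = (x, y') \<or> (u, v) = (x', y) \<or> ((x', y') \<in> r \<and> (u, v) = (x', y'))"
      using assms distinct refl_rel not_rel_if_level_le by (auto simp: induced_def)
  qed
  ultimately show ?thesis
    by (metis (full_types))
qed

end

locale obstruction_free_order = finite_order +
  assumes no_obs1: "\<not> (\<exists>T. level_induced S r T \<and> order_iso T (induced r T) obs_carrier O_obs1)"
    and no_obs2: "\<not> (\<exists>T. level_induced S r T \<and> order_iso T (induced r T) obs_carrier O_obs2)"
begin

lemma full_trunks_rel_if_level_less: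
  assumes "full_trunk S r T" "full_trunk S r T'" and "x \<in> T" "y \<in> T'"
    and "level r x < level r y"
  shows "(x, y) \<in> r"
proof (rule ccontr)
  assume "(x, y) \<notin> r"
  obtain C C' where C: "maximum_chain S r C" "C \<subseteq> T"
    and C': "maximum_chain S r C'" "C' \<subseteq> T'"
    using assms(1,2) unfolding full_trunk_def by blast
  have "T \<subseteq> S" "T' \<subseteq> S"
    using assms(1,2) by (auto simp: full_trunk_def trunk_def)
  with assms(3,4) have "x \<in> S" "y \<in> S"
    by auto
  then obtain y' x' where y': "y' \<in> C" "level r y' = level r y"
    and x': "x' \<in> C'" "level r x' = level r x"
    using maximum_chain_meets_level C(1) C'(1) by metis
  have "(x, y') \<in> r"
    using full_trunk_comparable_if_level_neq[OF assms(1,3), of y'] not_rel_if_level_le[of y' x]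
      y' C(2) assms(5) by auto
  moreover have "(x', y) \<in> r"
    using full_trunk_comparable_if_level_neq[OF assms(2) _ assms(4), of x']
      not_rel_if_level_le[of y x'] x' C'(2) assms(5) by auto
  moreover have "x' \<in> S" "y' \<in> S"
    using x'(1) y'(1) C(2) C'(2) \<open>T \<subseteq> S\<close> \<open>T' \<subseteq> S\<close> by auto
  ultimately show False
    using level_induced_obstruction_if_crossing[of x y x' y'] \<open>x \<in> S\<close> \<open>y \<in> S\<close>
      \<open>(x, y) \<notin> r\<close> x'(2) y'(2) assms(5) no_obs1 no_obs2 by blast
qed

lemma full_trunks_incomparable_level_eq:
  assumes "full_trunk S r T" "full_trunk S r T'" and "x \<in> T" "y \<in> T'" and "incomparable r x y"
  shows "level r x = level r y"
  using full_trunks_rel_if_level_less[OF assms(1-4)]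
    full_trunks_rel_if_level_less[OF assms(2,1,4,3)] assms(5)
  unfolding incomparable_def by (metis linorder_neqE_nat)

lemma full_trunk_Union_full_trunks: "full_trunk S r (\<Union>{T. full_trunk S r T})"
proof -
  let ?U = "\<Union>{T. full_trunk S r T}"
  obtain C where C: "maximum_chain S r C"
    using maximum_chain_exists by blast
  then have "C \<subseteq> ?U"
    using full_trunk_maximum_chain by blast
  moreover have "trunk S r ?U"
    unfolding trunk_def
  proof (intro conjI ballI impI)
    show "?U \<subseteq> S"
      by (auto simp: full_trunk_def trunk_def)
    fix a b c
    assume "a \<in> ?U" "b \<in> ?U" "c \<in> ?U" and "a \<noteq> b \<and> b \<noteq> c \<and> a \<noteq> c"
      and "incomparable r a b" "incomparable r b c"
    then show "incomparable r a c"
      using full_trunks_incomparable_level_eq incomparable_if_level_eq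
      by (metis UnionE mem_Collect_eq)
  qed
  ultimately show ?thesis
    using C unfolding full_trunk_def by blast
qed

end

theorem proposition8:
  fixes S :: "'a set" and r :: "'a rel"
  assumes "finite S" and "partial_order_on S r"
    and "\<not> (\<exists>T. level_induced S r T \<and> order_iso T (induced r T) obs_carrier O_obs1)"
    and "\<not> (\<exists>T. level_induced S r T \<and> order_iso T (induced r T) obs_carrier O_obs2)"
  shows "\<exists>T. relatively_maximum_full_trunk S r T"
proof -
  interpret obstruction_free_order S r
    using assms by unfold_locales
  have "\<And>T. full_trunk S r T \<Longrightarrow> T \<subseteq> \<Union>{T. full_trunk S r T}"
    by blast
  then show ?thesis
    using relatively_maximum_full_trunk_if_greatest full_trunk_Union_full_trunks by blast
qed

end
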